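(* Let $A\subseteq\Delta^{m-1}\times\Delta^{n-1}$, let $\mathscr T$ be a triangulation of $A$, and let $\mathscr T'$ be the result of a flip on $\mathscr T$ supported on a circuit $X=(X^+,X^-)$. Suppose $\sigma\in\mathscr T$, $\sigma\notin\mathscr T'$, and $G(\sigma)$ is connected. Then $\sigma$ contains an inclusion-maximal element of $\mathscr T_X^+$.
   Context: General conventions. For a finite point set $A\subset\mathbb R^d$: a cell is a subset of $A$; a simplex is an affinely independent cell; a face of a cell $C$ is a subset $F\subseteq C$ which is the set of minimizers on $C$ of some linear functional. A triangulation of $A$ is a collection $\mathscr T$ of simplices of $A$, closed under taking faces, such that for all $\sigma,\sigma'\in\mathscr T$, $\mathrm{conv}(\sigma)\cap\mathrm{conv}(\sigma')=\mathrm{conv}(F)$ for a common face $F$ of $\sigma$ and $\sigma'$, and such that $\bigcup_{\sigma\in\mathscr T}\mathrm{conv}(\sigma)=\mathrm{conv}(A)$. A circuit is a minimal affinely dependent subset $X$; it satisfies an affine dependence $\sum_{x\in X}\lambda_x x=0$, $\sum\lambda_x=0$, all $\lambda_x\neq0$, unique up to scaling, which partitions $X=X^+\cup X^-$ into the points with positive and with negative coefficients; writing $X=(X^+,X^-)$ fixes a choice of sign. Set $\mathscr T_X^+:=\{\sigma\subseteq X:X^+\not\subseteq\sigma\}$ and $\mathscr T_X^-:=\{\sigma\subseteq X:X^-\not\subseteq\sigma\}$. For $C\in\mathscr T$, $\mathrm{link}_{\mathscr T}(C):=\{C'\in\mathscr T: C\cap C'=\emptyset,\ C\cup C'\in\mathscr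 T\}$. A triangulation $\mathscr T$ of $A$ has a flip supported on the circuit $(X^+,X^-)$, $X\subseteq A$, if $\mathscr T_X^+\subseteq\mathscr T$ and all inclusion-maximal elements of $\mathscr T_X^+$ have the same link $\mathscr L$ in $\mathscr T$; the result of the flip is the triangulation $(\mathscr T\setminus\{\rho\cup\sigma:\rho\in\mathscr L,\sigma\in\mathscr T_X^+\})\cup\{\rho\cup\sigma:\rho\in\mathscr L,\sigma\in\mathscr T_X^-\}$. $\Delta^{m-1}\times\Delta^{n-1}:=\{(e_i,f_j):i\in[m],j\in[n]\}\subset\mathbb R^m\times\mathbb R^n$, with $e_i$, $f_j$ the standard basis vectors. Let $K$ be the complete bipartite graph on vertex set $\{e_1,\dots,e_m\}\cup\{f_1,\dots,f_n\}$ with edges $e_if_j$. For $C\subseteq\Delta^{m-1}\times\Delta^{n-1}$, $G(C)$ is the minimal subgraph of $K$ with edge set $\{e_if_j:(e_i,f_j)\in C\}$ (its vertices are the endpoints of these edges). *)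

theory Defs
  imports "HOL-Analysis.Analysis"
begin

definition is_simplex :: "'a::real_vector set \<Rightarrow> bool" where
  "is_simplex \<sigma> \<longleftrightarrow> \<not> affine_dependent \<sigma>"

text \<open>The empty set is also regarded as a cell_face (the usual convention, needed for the
  intersection axiom of triangulations to make sense for disjoint simplices).\<close>
definition cell_face :: "'a::real_vector set \<Rightarrow> 'a set \<Rightarrow> bool" where
  "cell_face F C \<longleftrightarrow> F \<subseteq> C \<and>
     (F = {} \<or> (\<exists>l::'a \<Rightarrow> real. linear l \<and> F = {x \<in> C. \<forall>y\<in>C. l x \<le> l y}))"

definition triangulation :: "'a::real_vector set \<Rightarrow> 'a set set \<Rightarrow> bool" where
  "triangulation A T \<longleftrightarrow>
     (\<forall>\<sigma>\<in>T. \<sigma> \<subseteq> A \<and> is_simplex \<sigma>) \<and>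
     (\<forall>\<sigma>\<in>T. \<forall>F. cell_face F \<sigma> \<longrightarrow> F \<in> T) \<and>
     (\<forall>\<sigma>\<in>T. \<forall>\<sigma>'\<in>T. \<exists>F. cell_face F \<sigma> \<and> cell_face F \<sigma>' \<and>
         convex hull \<sigma> \<inter> convex hull \<sigma>' = convex hull F) \<and>
     (\<Union>\<sigma>\<in>T. convex hull \<sigma>) = convex hull A"

definition circuit :: "'a::real_vector set \<Rightarrow> bool" where
  "circuit X \<longleftrightarrow> finite X \<and> affine_dependent X \<and> (\<forall>Y. Y \<subset> X \<longrightarrow> \<not> affine_dependent Y)"

definition signed_circuit :: "'a::real_vector set \<Rightarrow> 'a set \<Rightarrow> bool" where
  "signed_circuit Xp Xm \<longleftrightarrow> circuit (Xp \<union> Xm) \<and>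
     (\<exists>c::'a \<Rightarrow> real. (\<Sum>x\<in>Xp \<union> Xm. c x *\<^sub>R x) = 0 \<and> (\<Sum>x\<in>Xp \<union> Xm. c x) = 0 \<and>
        Xp = {x \<in> Xp \<union> Xm. c x > 0} \<and> Xm = {x \<in> Xp \<union> Xm. c x < 0} \<and>
        (\<forall>x\<in>Xp \<union> Xm. c x \<noteq> 0))"

definition T_plus :: "'a set \<Rightarrow> 'a set \<Rightarrow> 'a set set" where
  "T_plus Xp Xm = {\<sigma>. \<sigma> \<subseteq> Xp \<union> Xm \<and> \<not> Xp \<subseteq> \<sigma>}"

definition T_minus :: "'a set \<Rightarrow> 'a set \<Rightarrow> 'a set set" where
  "T_minus Xp Xm = {\<sigma>. \<sigma> \<subseteq> Xp \<union> Xm \<and> \<not> Xm \<subseteq> \<sigma>}"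

definition tri_link :: "'a set set \<Rightarrow> 'a set \<Rightarrow> 'a set set" where
  "tri_link T C = {C' \<in> T. C \<inter> C' = {} \<and> C \<union> C' \<in> T}"

definition inclusion_maximal :: "'a set set \<Rightarrow> 'a set \<Rightarrow> bool" where
  "inclusion_maximal S \<sigma> \<longleftrightarrow> \<sigma> \<in> S \<and> (\<forall>\<tau>\<in>S. \<sigma> \<subseteq> \<tau> \<longrightarrow> \<tau> = \<sigma>)"

definition flip_result :: "'a::real_vector set \<Rightarrow> 'a set set \<Rightarrow> 'a set \<Rightarrow> 'a set \<Rightarrow> 'a set set \<Rightarrow> bool" where
  "flip_result A T Xp Xm T' \<longleftrightarrow>
     Xp \<union> Xm \<subseteq> A \<and> signed_circuit Xp Xm \<and> T_plus Xp Xm \<subseteq> T \<and>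
     (\<exists>L. (\<forall>\<sigma>. inclusion_maximal (T_plus Xp Xm) \<sigma> \<longrightarrow> tri_link T \<sigma> = L) \<and>
          T' = (T - {\<rho> \<union> \<sigma> | \<rho> \<sigma>. \<rho> \<in> L \<and> \<sigma> \<in> T_plus Xp Xm})
               \<union> {\<rho> \<union> \<sigma> | \<rho> \<sigma>. \<rho> \<in> L \<and> \<sigma> \<in> T_minus Xp Xm})"

text \<open>The index types 'm and 'n have m and n elements; the point (e_i, f_j).\<close>
definition prodpt :: "'m::finite \<Rightarrow> 'n::finite \<Rightarrow> (real^'m) \<times> (real^'n)" where
  "prodpt i j = (axis i 1, axis j 1)"

definition delta_prod :: "((real^'m::finite) \<times> (real^'n::finite)) set" where
  "delta_prod = {prodpt i j | i j. True}"

text \<open>G(C): edges e_i f_j of the complete bipartite graph (vertices Inl i = e_i,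
  Inr j = f_j) with (e_i,f_j) \<in> C; its vertices are the endpoints of these edges.\<close>
definition G_edges :: "((real^'m::finite) \<times> (real^'n::finite)) set \<Rightarrow> ('m + 'n) set set" where
  "G_edges C = {{Inl i, Inr j} | i j. prodpt i j \<in> C}"

definition G_vertices :: "((real^'m::finite) \<times> (real^'n::finite)) set \<Rightarrow> ('m + 'n) set" where
  "G_vertices C = \<Union>(G_edges C)"

definition graph_connected :: "'v set \<Rightarrow> 'v set set \<Rightarrow> bool" where
  "graph_connected V E \<longleftrightarrow>
     (\<forall>u\<in>V. \<forall>v\<in>V. (u, v) \<in> {(x, y). {x, y} \<in> E}\<^sup>*)"

definition G_connected :: "((real^'m::finite) \<times> (real^'n::finite)) set \<Rightarrow> bool" where
  "G_connected C \<longleftrightarrow> graph_connected (G_vertices C) (G_edges C)"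

end

theory Submission
  imports Defs
begin

text \<open>
  A simplex \<sigma> destroyed by the flip has the form \<rho> \<union> s with \<rho> in the common link and
  s \<in> T_plus containing X-; pick x1 \<in> X+ - s, so that \<rho> \<union> (X - {x1}) is a simplex of T.
  If some x2 = (e_i, f_j) of X - {x1} were missing from \<sigma>, it would lie in X+; reading the
  circuit relation in the coordinates e_i and f_j shows that row i and column j both meet X-,
  hence are vertices of G(\<sigma>). A path in G(\<sigma>) between them puts (e_i, f_j) into the affine
  hull of \<sigma>, contradicting the affine independence of \<rho> \<union> (X - {x1}).
\<close>

lemma sum_eq_0_pos_term_imp_neg_term:
  fixes c g :: "'a \<Rightarrow> real"
  assumes "finite X" "(\<Sum>x\<in>X. c x * g x) = 0" "\<forall>x\<in>X. g x \<ge> 0"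
    and "x \<in> X" "c x > 0" "g x > 0"
  shows "\<exists>y\<in>X. c y < 0 \<and> g y > 0"
proof (rule ccontr)
  assume "\<not> ?thesis"
  then have nonneg: "\<forall>y\<in>X. c y * g y \<ge> 0"
    using assms(3) by (metis linorder_not_less mult_nonneg_nonneg order_antisym_conv
        mult_zero_right)
  have "0 < c x * g x" using assms(5,6) by simp
  also have "\<dots> \<le> (\<Sum>y\<in>X. c y * g y)"
    using member_le_sum[of x X "\<lambda>y. c y * g y"] nonneg assms(1,4) by auto
  finally show False using assms(2) by simp
qed

lemma prodpt_components [simp]:
  "fst (prodpt i j) $ k = (if k = i then 1 else 0)"
  "snd (prodpt i j) $ l = (if l = j then 1 else 0)"
  by (simp_all add: prodpt_def axis_def)

lemma signed_circuit_row_column_partners: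
  assumes "signed_circuit Xp Xm" "Xp \<union> Xm \<subseteq> delta_prod" "prodpt i j \<in> Xp"
  shows "(\<exists>j'. prodpt i j' \<in> Xm) \<and> (\<exists>i'. prodpt i' j \<in> Xm)"
proof -
  define X where "X = Xp \<union> Xm"
  obtain c where fin: "finite X" and dep: "(\<Sum>x\<in>X. c x *\<^sub>R x) = 0"
    and Xp: "Xp = {x \<in> X. c x > 0}" and Xm: "Xm = {x \<in> X. c x < 0}"
    using assms(1) unfolding signed_circuit_def circuit_def X_def by blast
  have pts: "\<And>x. x \<in> X \<Longrightarrow> \<exists>i j. x = prodpt i j"
    using assms(2) unfolding delta_prod_def X_def by blast
  have x: "prodpt i j \<in> X" "c (prodpt i j) > 0" using assms(3) Xp by auto
  have "(\<Sum>x\<in>X. c x * fst x $ i) = 0"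
    using arg_cong[OF dep, of "\<lambda>v. fst v $ i"] by (simp add: fst_sum)
  moreover have "\<forall>x\<in>X. fst x $ i \<ge> 0" using pts by fastforce
  ultimately obtain y where y: "y \<in> X" "c y < 0" "fst y $ i > 0"
    using sum_eq_0_pos_term_imp_neg_term[of X c "\<lambda>x. fst x $ i" "prodpt i j"] fin x by auto
  have "(\<Sum>x\<in>X. c x * snd x $ j) = 0"
    using arg_cong[OF dep, of "\<lambda>v. snd v $ j"] by (simp add: snd_sum)
  moreover have "\<forall>x\<in>X. snd x $ j \<ge> 0" using pts by fastforce
  ultimately obtain z where z: "z \<in> X" "c z < 0" "snd z $ j > 0"
    using sum_eq_0_pos_term_imp_neg_term[of X c "\<lambda>x. snd x $ j" "prodpt i j"] fin x by auto
  from y z pts show ?thesis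
    unfolding Xm by (metis (mono_tags, lifting) mem_Collect_eq prodpt_components
        less_irrefl)
qed

lemma affine_prodpt_rectangle:
  assumes "affine H" "prodpt i j \<in> H" "prodpt i j' \<in> H" "prodpt i' j \<in> H"
  shows "prodpt i' j' \<in> H"
proof -
  have "prodpt i j' + 1 *\<^sub>R (prodpt i' j - prodpt i j) \<in> H"
    using mem_affine_3_minus[OF assms(1,3,4,2)] .
  moreover have "prodpt i j' + 1 *\<^sub>R (prodpt i' j - prodpt i j) = prodpt i' j'"
    by (simp add: prodpt_def)
  ultimately show ?thesis by simp
qed

lemma G_walk_from_row_affine_hull:
  assumes "(Inl i0, v) \<in> {(x, y). {x, y} \<in> G_edges C}\<^sup>*"
  shows "(\<forall>j. v = Inr j \<longrightarrow> prodpt i0 j \<in> affine hull C) \<and>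
         (\<forall>i. v = Inl i \<longrightarrow> (\<forall>j. prodpt i j \<in> affine hull C \<longrightarrow> prodpt i0 j \<in> affine hull C))"
  using assms
proof (induction rule: rtrancl_induct)
  case base
  then show ?case by simp
next
  case (step y z)
  then obtain i j where "{y, z} = {Inl i, Inr j}" and "prodpt i j \<in> C"
    unfolding G_edges_def by auto
  then have ij: "prodpt i j \<in> affine hull C"
    and yz: "(y = Inl i \<and> z = Inr j) \<or> (y = Inr j \<and> z = Inl i)"
    by (auto simp: hull_inc doubleton_eq_iff)
  from yz show ?case
  proof
    assume yz: "y = Inr j \<and> z = Inl i"
    then have "prodpt i0 j \<in> affine hull C" using step.IH by simp
    then have "prodpt i0 j' \<in> affine hull C" if "prodpt i j' \<in> affine hull C" for j'
      using affine_prodpt_rectangle[OF affine_affine_hull ij that] by blast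
    then show ?thesis using yz by simp
  qed (use step.IH ij in auto)
qed

lemma G_connected_prodpt_in_affine_hull:
  assumes "G_connected C" "prodpt i j' \<in> C" "prodpt i' j \<in> C"
  shows "prodpt i j \<in> affine hull C"
proof -
  have "Inl i \<in> G_vertices C" "Inr j \<in> G_vertices C"
    using assms(2,3) unfolding G_vertices_def G_edges_def by blast+
  then have "(Inl i, Inr j) \<in> {(x, y). {x, y} \<in> G_edges C}\<^sup>*"
    using assms(1) unfolding G_connected_def graph_connected_def by blast
  then show ?thesis using G_walk_from_row_affine_hull by blast
qed

lemma signed_circuit_positive_point_in_affine_hull:
  assumes "signed_circuit Xp Xm" "Xp \<union> Xm \<subseteq> delta_prod"
    and "Xm \<subseteq> C" "G_connected C" "x \<in> Xp"
  shows "x \<in> affine hull C"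
proof -
  obtain i j where x: "x = prodpt i j"
    using assms(2,5) unfolding delta_prod_def by blast
  then show ?thesis
    using signed_circuit_row_column_partners[OF assms(1,2)] assms(3-5)
      G_connected_prodpt_in_affine_hull[OF assms(4)] by blast
qed

lemma flip_removed_simplex:
  assumes "flip_result A T Xp Xm T'" "\<sigma> \<in> T" "\<sigma> \<notin> T'"
  obtains \<rho> s where "\<sigma> = \<rho> \<union> s"
    and "\<And>\<tau>. inclusion_maximal (T_plus Xp Xm) \<tau> \<Longrightarrow> \<rho> \<in> tri_link T \<tau>"
    and "s \<subseteq> Xp \<union> Xm" "Xm \<subseteq> s" "\<not> Xp \<subseteq> s"
proof -
  obtain L where link: "\<And>\<tau>. inclusion_maximal (T_plus Xp Xm) \<tau> \<Longrightarrow> tri_link T \<tau> = L"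
    and T': "T' = (T - {\<rho> \<union> s | \<rho> s. \<rho> \<in> L \<and> s \<in> T_plus Xp Xm})
               \<union> {\<rho> \<union> s | \<rho> s. \<rho> \<in> L \<and> s \<in> T_minus Xp Xm}"
    using assms(1) unfolding flip_result_def by blast
  then obtain \<rho> s where "\<sigma> = \<rho> \<union> s" "\<rho> \<in> L" "s \<in> T_plus Xp Xm" "s \<notin> T_minus Xp Xm"
    using assms(2,3) by blast
  then show ?thesis
    using that link unfolding T_plus_def T_minus_def by auto
qed

lemma inclusion_maximal_T_plus_remove:
  assumes "x \<in> Xp"
  shows "inclusion_maximal (T_plus Xp Xm) (Xp \<union> Xm - {x})"
  using assms unfolding inclusion_maximal_def T_plus_def by auto

theorem proposition6p1:
  fixes A :: "((real^'m::finite) \<times> (real^'n::finite)) set"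
    and T T' :: "((real^'m) \<times> (real^'n)) set set"
    and Xp Xm \<sigma> :: "((real^'m) \<times> (real^'n)) set"
  assumes "A \<subseteq> delta_prod"
    and "triangulation A T"
    and "flip_result A T Xp Xm T'"
    and "\<sigma> \<in> T" and "\<sigma> \<notin> T'"
    and "G_connected \<sigma>"
  shows "\<exists>\<tau>. inclusion_maximal (T_plus Xp Xm) \<tau> \<and> \<tau> \<subseteq> \<sigma>"
proof -
  have circ: "signed_circuit Xp Xm" "Xp \<union> Xm \<subseteq> delta_prod"
    using assms(1,3) unfolding flip_result_def by auto
  obtain \<rho> s where \<sigma>: "\<sigma> = \<rho> \<union> s"
    and link: "\<And>\<tau>. inclusion_maximal (T_plus Xp Xm) \<tau> \<Longrightarrow> \<rho> \<in> tri_link T \<tau>"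
    and s: "s \<subseteq> Xp \<union> Xm" "Xm \<subseteq> s" "\<not> Xp \<subseteq> s"
    using flip_removed_simplex[OF assms(3-5)] by blast
  then obtain x1 where x1: "x1 \<in> Xp" "x1 \<notin> s" by blast
  define \<tau> where "\<tau> = Xp \<union> Xm - {x1}"
  have max: "inclusion_maximal (T_plus Xp Xm) \<tau>"
    unfolding \<tau>_def using inclusion_maximal_T_plus_remove[OF x1(1)] .
  have "\<rho> \<union> \<tau> \<in> T" using link[OF max] by (auto simp: tri_link_def Un_commute)
  then have indep: "\<not> affine_dependent (\<rho> \<union> \<tau>)"
    using assms(2) unfolding triangulation_def is_simplex_def by blast
  have "\<tau> \<subseteq> \<sigma>"
  proof
    fix x assume x: "x \<in> \<tau>"
    show "x \<in> \<sigma>"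
    proof (rule ccontr)
      assume "x \<notin> \<sigma>"
      then have "x \<in> Xp" "\<sigma> \<subseteq> \<rho> \<union> \<tau> - {x}"
        using x s x1 \<sigma> unfolding \<tau>_def by auto
      then have "x \<in> affine hull (\<rho> \<union> \<tau> - {x})"
        using signed_circuit_positive_point_in_affine_hull[OF circ] s(2) assms(6) \<sigma>
          hull_mono by blast
      then show False using indep x unfolding affine_dependent_def by blast
    qed
  qed
  with max show ?thesis by blast
qed

end
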